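(* Let $\phi$ assign to each matroid $M$ on $E$ the class in $K_T^0(X_E)$ given by a fixed polynomial expression in the exterior powers of $[\mathcal S_M]$, $[\mathcal Q_M]$, $[\mathcal S_M^\vee]$, $[\mathcal Q_M^\vee]$, and let $\psi$ assign to $M$ the (equivariant or non-equivariant) Chow class on $X_E$ given by a fixed polynomial expression in the (equivariant or non-equivariant, respectively) Chern classes of $[\mathcal S_M]$, $[\mathcal Q_M]$ and their duals. Then $\phi$ and $\psi$ are valuative.
   Context: $E=\{0,\dots,n\}$, $T=(\mathbb C^* )^E$, $X_E$ the permutohedral variety (toric variety of the fan in $\mathbb R^E/\mathbb R\mathbf 1$ with cones $\operatorname{Cone}(\overline{\mathbf e}_{S_1},\dots,\overline{\mathbf e}_{S_k})$ for chains of nonempty proper subsets), fixed points $p_\sigma$ indexed by permutations of $E$; $K_T^0(X_E)$ embeds in $\prod_\sigma\mathbb Z[T_0^{\pm1},\dots,T_n^{\pm1}]$ by restriction. $B_\sigma(M)$ is the lexicographically first basis for the order $\sigma(0)\prec\cdots\prec\sigma(n)$; $[\mathcal S_M],[\mathcal Q_M]\in K_T^0(X_E)$ restrict at $p_\sigma$ to $\sum_{i\in B_\sigma(M)}T_i^{-1}$ and $\sum_{i\notin B_\sigma(M)}T_i^{-1}$; $\vee$ is dual. The base polytope of $M$ is $P(M)=\operatorname{Conv}(\sum_{i\in B}\mathbf e_i: B\text{ a basis})\subset\mathbb R^E$, and $1_P$ denotes the indicator function. A function $\phi$ from matroids on $E$ to an abelian group is valuative if whenever $M_1,\dots,M_\ell$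 are matroids on $E$ and $a_i\in\mathbb Z$ with $\sum_ia_i1_{P(M_i)}=0$, one has $\sum_ia_i\phi(M_i)=0$. *)

theory Defs
  imports Complex_Main "HOL-Library.Poly_Mapping" "HOL-Library.Function_Algebras" "HOL-Library.Indicator_Function"
    "HOL-Combinatorics.Permutations" "HOL-Combinatorics.Transposition"
begin

definition matroid_on :: "nat set \<Rightarrow> nat set set \<Rightarrow> bool" where
  "matroid_on E \<B> \<longleftrightarrow> \<B> \<noteq> {} \<and> (\<forall>B\<in>\<B>. B \<subseteq> E) \<and>
     (\<forall>B1\<in>\<B>. \<forall>B2\<in>\<B>. \<forall>x\<in>B1 - B2. \<exists>y\<in>B2 - B1. insert y (B1 - {x}) \<in> \<B>)"

text \<open>Base polytope P(M) = Conv(e_B : B a basis) in R^E; points of R^E are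
  functions nat => real (coordinates outside E are irrelevant: they vanish on P(M)).\<close>
definition base_polytope :: "nat set set \<Rightarrow> (nat \<Rightarrow> real) set" where
  "base_polytope \<B> = {x. \<exists>w :: nat set \<Rightarrow> real. (\<forall>B\<in>\<B>. 0 \<le> w B) \<and> (\<Sum>B\<in>\<B>. w B) = 1 \<and>
       x = (\<lambda>j. \<Sum>B\<in>\<B>. w B * (if j \<in> B then 1 else 0))}"

definition zsmult :: "int \<Rightarrow> 'g::ab_group_add \<Rightarrow> 'g" where
  "zsmult k x = (if 0 \<le> k then (\<Sum>_<nat k. x) else - (\<Sum>_<nat (- k). x))"

definition valuative :: "nat \<Rightarrow> (nat set set \<Rightarrow> 'g::ab_group_add) \<Rightarrow> bool" where
  "valuative n \<phi> \<longleftrightarrow>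
    (\<forall>(Ms :: nat set set list) (a :: int list).
       length a = length Ms \<longrightarrow> (\<forall>M\<in>set Ms. matroid_on {..n} M) \<longrightarrow>
       (\<forall>x. (\<Sum>i<length Ms. a ! i * indicator (base_polytope (Ms ! i)) x) = (0::int)) \<longrightarrow>
       (\<Sum>i<length Ms. zsmult (a ! i) (\<phi> (Ms ! i))) = 0)"

text \<open>sigma permutes {..n}; the order is sigma 0 < sigma 1 < ... < sigma n, so
  the position of i is inv sigma i. A set is compared through the sorted list of
  positions of its elements.\<close>
definition sorted_positions :: "(nat \<Rightarrow> nat) \<Rightarrow> nat set \<Rightarrow> nat list" where
  "sorted_positions \<sigma> B = sorted_list_of_set (inv \<sigma> ` B)"

definition lex_first_basis :: "nat set set \<Rightarrow> (nat \<Rightarrow> nat) \<Rightarrow> nat set" where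
  "lex_first_basis \<B> \<sigma> = (THE B. B \<in> \<B> \<and> (\<forall>B'\<in>\<B>. B' \<noteq> B \<longrightarrow>
       (sorted_positions \<sigma> B, sorted_positions \<sigma> B') \<in> lexord {(i, j). i < j}))"

type_synonym laurent = "(nat \<Rightarrow>\<^sub>0 int) \<Rightarrow>\<^sub>0 int"
type_synonym cpoly = "(nat \<Rightarrow>\<^sub>0 nat) \<Rightarrow>\<^sub>0 int"

definition TT :: "nat \<Rightarrow> laurent" where "TT i = Poly_Mapping.single (Poly_Mapping.single i 1) 1"
definition TTinv :: "nat \<Rightarrow> laurent" where "TTinv i = Poly_Mapping.single (Poly_Mapping.single i (-1)) 1"
definition tt :: "nat \<Rightarrow> cpoly" where "tt i = Poly_Mapping.single (Poly_Mapping.single i 1) 1"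

definition elem_sym :: "nat \<Rightarrow> (nat \<Rightarrow> 'a::comm_ring_1) \<Rightarrow> nat set \<Rightarrow> 'a" where
  "elem_sym k x A = (\<Sum>S\<in>{S. S \<subseteq> A \<and> card S = k}. \<Prod>i\<in>S. x i)"

definition mono_eval :: "('v \<Rightarrow> 'a::comm_ring_1) \<Rightarrow> ('v \<Rightarrow>\<^sub>0 nat) \<Rightarrow> 'a" where
  "mono_eval x e = (\<Prod>v\<in>Poly_Mapping.keys e. x v ^ Poly_Mapping.lookup e v)"

definition poly_eval :: "('v \<Rightarrow> 'a::comm_ring_1) \<Rightarrow> (('v \<Rightarrow>\<^sub>0 nat) \<Rightarrow>\<^sub>0 int) \<Rightarrow> 'a" where
  "poly_eval x p = (\<Sum>e\<in>Poly_Mapping.keys p. of_int (Poly_Mapping.lookup p e) * mono_eval x e)"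

datatype vb = Sb | Qb | Sdual | Qdual

text \<open>Variables (b, k) stand for lambda^k of the vector bundle b (K-theory) or c_k of b (Chow).\<close>

text \<open>[S_M] at p_sigma is sum_{i in B_sigma} T_i^{-1}; lambda^k of a sum of characters
  is the k-th elementary symmetric function of the characters.\<close>
definition ext_power_at :: "nat \<Rightarrow> nat set set \<Rightarrow> (nat \<Rightarrow> nat) \<Rightarrow> vb \<Rightarrow> nat \<Rightarrow> laurent" where
  "ext_power_at n \<B> \<sigma> b k = (let B = lex_first_basis \<B> \<sigma> in case b of
      Sb \<Rightarrow> elem_sym k TTinv B
    | Qb \<Rightarrow> elem_sym k TTinv ({..n} - B)
    | Sdual \<Rightarrow> elem_sym k TT B
    | Qdual \<Rightarrow> elem_sym k TT ({..n} - B))"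

text \<open>The K-class phi(M), embedded in prod_sigma Z[T^{+-1}] (value 0 off permutations).\<close>
definition K_class :: "nat \<Rightarrow> ((vb \<times> nat \<Rightarrow>\<^sub>0 nat) \<Rightarrow>\<^sub>0 int) \<Rightarrow> nat set set \<Rightarrow> (nat \<Rightarrow> nat) \<Rightarrow> laurent" where
  "K_class n P \<B> \<sigma> = (if \<sigma> permutes {..n} then poly_eval (\<lambda>(b, k). ext_power_at n \<B> \<sigma> b k) P else 0)"

text \<open>Equivariant Chern classes: the character T_i^{-1} has weight -t_i, T_i weight t_i;
  c^T_k of a sum of characters is e_k of the weights.\<close>
definition chern_at :: "nat \<Rightarrow> nat set set \<Rightarrow> (nat \<Rightarrow> nat) \<Rightarrow> vb \<Rightarrow> nat \<Rightarrow> cpoly" where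
  "chern_at n \<B> \<sigma> b k = (let B = lex_first_basis \<B> \<sigma> in case b of
      Sb \<Rightarrow> elem_sym k (\<lambda>i. - tt i) B
    | Qb \<Rightarrow> elem_sym k (\<lambda>i. - tt i) ({..n} - B)
    | Sdual \<Rightarrow> elem_sym k tt B
    | Qdual \<Rightarrow> elem_sym k tt ({..n} - B))"

text \<open>Equivariant Chow class psi(M) in A_T(X_E), embedded in prod_sigma Z[t].\<close>
definition chowT_class :: "nat \<Rightarrow> ((vb \<times> nat \<Rightarrow>\<^sub>0 nat) \<Rightarrow>\<^sub>0 int) \<Rightarrow> nat set set \<Rightarrow> (nat \<Rightarrow> nat) \<Rightarrow> cpoly" where
  "chowT_class n P \<B> \<sigma> = (if \<sigma> permutes {..n} then poly_eval (\<lambda>(b, k). chern_at n \<B> \<sigma> b k) P else 0)"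

text \<open>A_T(X_E) as the image of localization (GKM description): tuples (f_sigma) such that
  f_sigma - f_{sigma (k k+1)} is divisible by t_{sigma k} - t_{sigma (k+1)}.\<close>
definition chowT_ring :: "nat \<Rightarrow> ((nat \<Rightarrow> nat) \<Rightarrow> cpoly) set" where
  "chowT_ring n = {f. (\<forall>\<sigma>. \<not> \<sigma> permutes {..n} \<longrightarrow> f \<sigma> = 0) \<and>
     (\<forall>\<sigma>. \<sigma> permutes {..n} \<longrightarrow> (\<forall>k<n.
        (tt (\<sigma> k) - tt (\<sigma> (Suc k))) dvd (f \<sigma> - f (\<sigma> \<circ> transpose k (Suc k)))))}"

text \<open>The kernel of A_T(X_E) -> A(X_E).\<close>
definition forget_kernel :: "nat \<Rightarrow> ((nat \<Rightarrow> nat) \<Rightarrow> cpoly) set" where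
  "forget_kernel n = {f. \<exists>g. (\<forall>j\<le>n. g j \<in> chowT_ring n) \<and> f = (\<Sum>j\<le>n. (\<lambda>\<sigma>. tt j * g j \<sigma>))}"

text \<open>The non-equivariant class psi(M) is the image of chowT_class under forgetting; valuativity
  of a map into the quotient A(X_E) means the combination lies in the kernel.\<close>
definition valuative_nonequiv :: "nat \<Rightarrow> (nat set set \<Rightarrow> (nat \<Rightarrow> nat) \<Rightarrow> cpoly) \<Rightarrow> bool" where
  "valuative_nonequiv n \<psi> \<longleftrightarrow>
    (\<forall>(Ms :: nat set set list) (a :: int list).
       length a = length Ms \<longrightarrow> (\<forall>M\<in>set Ms. matroid_on {..n} M) \<longrightarrow>
       (\<forall>x. (\<Sum>i<length Ms. a ! i * indicator (base_polytope (Ms ! i)) x) = (0::int)) \<longrightarrow>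
       (\<Sum>i<length Ms. zsmult (a ! i) (\<psi> (Ms ! i))) \<in> forget_kernel n)"

end

theory Submission
  imports Defs "HOL-Analysis.Analysis"
begin

(* Order E by a permutation sigma and give the element in position k the weight 2^-k. The
   lexicographically first basis B_sigma(M) is then the basis of largest weight, so e_{B_sigma(M)}
   is the vertex of P(M) at which this linear form is maximal, and different bases have different
   weights. It therefore suffices to show: if sum_i a_i 1_{P_i} = 0 for compact convex P_i, then
   for every linear form l and every h the a_i with max l(P_i) = h sum to zero. Forgetting one
   coordinate at a time (the fibres of compact convex sets are intervals, and an integer relation
   among intervals forces the coefficients of the nonempty ones to sum to zero) transports the
   relation to the intervals l(P_i), where comparing it at h and just to the right of h gives the
   claim. Hence every class whose restriction to p_sigma is a function of B_sigma(M) -- in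
   particular every polynomial in exterior powers or Chern classes of S_M, Q_M and their duals --
   is valuative, and so is its non-equivariant image. *)

section \<open>Integer relations among indicator functions of compact convex sets\<close>

definition indicator_relation :: "'i set \<Rightarrow> ('i \<Rightarrow> int) \<Rightarrow> ('i \<Rightarrow> 'x set) \<Rightarrow> bool" where
  "indicator_relation I a P \<longleftrightarrow> (\<forall>x. (\<Sum>i\<in>I. a i * indicator (P i) x) = 0)"

lemma finite_set_pos_lower_bound:
  fixes D :: "real set"
  assumes "finite D" "\<forall>d\<in>D. 0 < d"
  obtains \<delta> where "0 < \<delta>" "\<forall>d\<in>D. \<delta> < d"
proof
  have pos: "0 < Min (insert 1 D)" using assms by simp
  then show "0 < Min (insert 1 D) / 2" by simp
  show "\<forall>d\<in>D. Min (insert 1 D) / 2 < d"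
  proof
    fix d assume "d \<in> D"
    then have "Min (insert 1 D) \<le> d" using assms(1) by simp
    with pos show "Min (insert 1 D) / 2 < d" by simp
  qed
qed

lemma compact_convex_real_interval:
  fixes S :: "real set"
  assumes "compact S" "convex S" "S \<noteq> {}"
  obtains lo hi where "lo \<le> hi" "S = {lo..hi}"
  using assms connected_compact_interval_1 convex_connected
  by (metis atLeastatMost_empty_iff)

text \<open>Subtracting the relation at \<open>h + \<delta>\<close> from the relation at \<open>h\<close>, for small \<open>\<delta>\<close>, leaves
  exactly the intervals whose right endpoint is \<open>h\<close>.\<close>
lemma indicator_relation_Sup_eq:
  fixes F :: "'i \<Rightarrow> real set"
  assumes "finite I" and cc: "\<And>i. i \<in> I \<Longrightarrow> compact (F i) \<and> convex (F i)"
    and rel: "indicator_relation I a F"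
  shows "(\<Sum>i\<in>{i\<in>I. F i \<noteq> {} \<and> Sup (F i) = h}. a i) = 0"
proof -
  define D where "D = {d \<in> (\<lambda>i. Sup (F i) - h) ` I \<union> (\<lambda>i. Inf (F i) - h) ` I. 0 < d}"
  have "finite D" using \<open>finite I\<close> by (simp add: D_def)
  moreover have "\<forall>d\<in>D. 0 < d" by (simp add: D_def)
  ultimately obtain \<delta> where "0 < \<delta>" and \<delta>: "\<forall>d\<in>D. \<delta> < d"
    by (rule finite_set_pos_lower_bound)
  have jump: "indicator (F i) h - indicator (F i) (h + \<delta>) = (if F i \<noteq> {} \<and> Sup (F i) = h then 1 else (0::int))"
    if "i \<in> I" for i
  proof (cases "F i = {}")
    case False
    with cc[OF that] obtain lo hi where "lo \<le> hi" and Fi: "F i = {lo..hi}"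
      using compact_convex_real_interval by blast
    have SI: "Sup (F i) = hi" "Inf (F i) = lo" using Fi \<open>lo \<le> hi\<close> by simp_all
    have "hi > h \<Longrightarrow> hi - h \<in> D" "lo > h \<Longrightarrow> lo - h \<in> D"
      using that unfolding D_def SI[symmetric] by auto
    then have "hi > h \<Longrightarrow> \<delta> < hi - h" "lo > h \<Longrightarrow> \<delta> < lo - h"
      using \<delta> by auto
    with \<open>lo \<le> hi\<close> \<open>0 < \<delta>\<close> show ?thesis
      unfolding Fi by (cases "h < lo") (auto simp: indicator_def)
  qed simp
  have "0 = (\<Sum>i\<in>I. a i * indicator (F i) h) - (\<Sum>i\<in>I. a i * indicator (F i) (h + \<delta>))"
    using rel by (simp add: indicator_relation_def)
  also have "\<dots> = (\<Sum>i\<in>I. a i * (indicator (F i) h - indicator (F i) (h + \<delta>)))"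
    by (simp add: sum_subtractf right_diff_distrib)
  also have "\<dots> = (\<Sum>i\<in>I. if F i \<noteq> {} \<and> Sup (F i) = h then a i else 0)"
    using jump by (intro sum.cong) auto
  finally show ?thesis
    using \<open>finite I\<close> by (simp add: sum.inter_filter)
qed

lemma indicator_relation_nonempty:
  fixes F :: "'i \<Rightarrow> real set"
  assumes "finite I" and "\<And>i. i \<in> I \<Longrightarrow> compact (F i) \<and> convex (F i)"
    and "indicator_relation I a F"
  shows "(\<Sum>i\<in>{i\<in>I. F i \<noteq> {}}. a i) = 0"
proof -
  let ?N = "{i\<in>I. F i \<noteq> {}}"
  have "(\<Sum>i\<in>?N. a i) = (\<Sum>h\<in>(\<lambda>i. Sup (F i)) ` ?N. \<Sum>i\<in>{i\<in>?N. Sup (F i) = h}. a i)"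
    using \<open>finite I\<close> by (intro sum.group[symmetric]) auto
  also have "\<dots> = 0"
    by (rule sum.neutral) (use indicator_relation_Sup_eq[OF assms] in \<open>simp add: conj_assoc\<close>)
  finally show ?thesis .
qed

text \<open>Functions \<open>'a \<Rightarrow> real\<close> are not an instance of \<open>real_vector\<close>, so convexity is spelt out.\<close>
definition fun_convex :: "('a \<Rightarrow> real) set \<Rightarrow> bool" where
  "fun_convex S \<longleftrightarrow> (\<forall>x\<in>S. \<forall>y\<in>S. \<forall>u\<in>{0..1}. (\<lambda>j. (1 - u) * x j + u * y j) \<in> S)"

lemma compact_fun_convex_image:
  fixes f :: "('a \<Rightarrow> real) \<Rightarrow> ('b \<Rightarrow> real)"
  assumes "compact S" "fun_convex S" "continuous_on UNIV f"
    and affine: "\<And>x y u. f (\<lambda>j. (1 - u) * x j + u * y j) = (\<lambda>j. (1 - u) * f x j + u * f y j)"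
  shows "compact (f ` S) \<and> fun_convex (f ` S)"
proof
  show "compact (f ` S)"
    by (rule compact_continuous_image[OF continuous_on_subset[OF assms(3) subset_UNIV] assms(1)])
  show "fun_convex (f ` S)"
    unfolding fun_convex_def
  proof (intro ballI)
    fix fx fy u assume "fx \<in> f ` S" "fy \<in> f ` S" "u \<in> {0..1::real}"
    then obtain x y where "x \<in> S" "y \<in> S" "fx = f x" "fy = f y" by auto
    with assms(2) \<open>u \<in> {0..1}\<close> have "(\<lambda>j. (1 - u) * x j + u * y j) \<in> S"
      unfolding fun_convex_def by blast
    then show "(\<lambda>j. (1 - u) * fx j + u * fy j) \<in> f ` S"
      unfolding \<open>fx = f x\<close> \<open>fy = f y\<close> affine[symmetric] by (rule imageI)
  qed
qed

lemma compact_convex_fiber: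
  fixes S :: "('a::countable \<Rightarrow> real) set"
  assumes "compact S" "fun_convex S"
  shows "compact {t. y(k := t) \<in> S} \<and> convex {t. y(k := t) \<in> S}"
proof
  have "continuous_on UNIV (\<lambda>t::real. y(k := t))"
  proof (rule continuous_on_coordinatewise_then_product)
    show "continuous_on UNIV (\<lambda>t. (y(k := t)) j)" for j
      by (cases "j = k") auto
  qed
  then have "closed {t. y(k := t) \<in> S}"
    using closed_vimage[OF compact_imp_closed[OF assms(1)]] by (simp add: vimage_def)
  moreover have "bounded {t. y(k := t) \<in> S}"
  proof (rule bounded_subset)
    show "bounded ((\<lambda>x. x k) ` S)"
      by (intro compact_imp_bounded compact_continuous_image assms(1)
          continuous_on_subset[OF continuous_on_product_coordinates subset_UNIV])
    show "{t. y(k := t) \<in> S} \<subseteq> (\<lambda>x. x k) ` S"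
      by (auto intro!: image_eqI[where x = "y(k := _)"])
  qed
  ultimately show "compact {t. y(k := t) \<in> S}"
    by (simp add: compact_eq_bounded_closed)
  show "convex {t. y(k := t) \<in> S}"
  proof (rule convexI, simp)
    fix s t u v :: real
    assume st: "y(k := s) \<in> S" "y(k := t) \<in> S" and uv: "0 \<le> u" "0 \<le> v" "u + v = 1"
    have "u = 1 - v" using uv by simp
    then have "y(k := u * s + v * t) = (\<lambda>j. (1 - v) * (y(k := s)) j + v * (y(k := t)) j)"
      by (simp add: fun_eq_iff left_diff_distrib)
    also have "\<dots> \<in> S"
      using assms(2) st uv unfolding fun_convex_def by (simp del: fun_upd_apply)
    finally show "y(k := u * s + v * t) \<in> S" .
  qed
qed

text \<open>The fibre of each set over a point is a compact interval, so the one-dimensional case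
  applies fibrewise.\<close>
lemma indicator_relation_drop_coordinate:
  fixes P :: "'i \<Rightarrow> ('a::countable \<Rightarrow> real) set"
  assumes "finite I" and cc: "\<And>i. i \<in> I \<Longrightarrow> compact (P i) \<and> fun_convex (P i)"
    and rel: "indicator_relation I a P"
  shows "indicator_relation I a (\<lambda>i. (\<lambda>x. x(k := 0)) ` P i)"
  unfolding indicator_relation_def
proof
  fix y :: "'a \<Rightarrow> real"
  show "(\<Sum>i\<in>I. a i * indicator ((\<lambda>x. x(k := 0)) ` P i) y) = 0"
  proof (cases "y k = 0")
    case False
    then have "y \<notin> (\<lambda>x. x(k := 0)) ` P i" for i by auto
    then show ?thesis by simp
  next
    case True
    define F where "F i = {t. y(k := t) \<in> P i}" for i
    have mem: "y \<in> (\<lambda>x. x(k := 0)) ` P i \<longleftrightarrow> F i \<noteq> {}" for i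
    proof
      assume "y \<in> (\<lambda>x. x(k := 0)) ` P i"
      then obtain x where "x \<in> P i" "y = x(k := 0)" by auto
      then have "x k \<in> F i" by (simp add: F_def)
      then show "F i \<noteq> {}" by blast
    next
      assume "F i \<noteq> {}"
      then obtain t where "y(k := t) \<in> P i" by (auto simp: F_def)
      moreover have "y = (y(k := t))(k := 0)" using True by (simp add: fun_upd_idem)
      ultimately show "y \<in> (\<lambda>x. x(k := 0)) ` P i" by blast
    qed
    have "(\<Sum>i\<in>I. a i * indicator ((\<lambda>x. x(k := 0)) ` P i) y) = (\<Sum>i\<in>I. if F i \<noteq> {} then a i else 0)"
      using mem by (intro sum.cong) (auto simp: indicator_def)
    also have "\<dots> = (\<Sum>i\<in>{i\<in>I. F i \<noteq> {}}. a i)"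
      using \<open>finite I\<close> by (simp add: sum.inter_filter)
    also have "\<dots> = 0"
    proof (rule indicator_relation_nonempty[OF \<open>finite I\<close>])
      show "compact (F i) \<and> convex (F i)" if "i \<in> I" for i
        unfolding F_def by (rule compact_convex_fiber) (use cc[OF that] in auto)
      have "indicator (F i) t = (indicator (P i) (y(k := t)) :: int)" for i t
        by (simp add: F_def indicator_def)
      then show "indicator_relation I a F"
        using rel by (simp add: indicator_relation_def)
    qed
    finally show ?thesis .
  qed
qed

definition zero_coords :: "'a set \<Rightarrow> ('a \<Rightarrow> real) \<Rightarrow> ('a \<Rightarrow> real)" where
  "zero_coords K x = (\<lambda>j. if j \<in> K then 0 else x j)"

lemma indicator_relation_zero_coords:
  fixes P :: "'i \<Rightarrow> ('a::countable \<Rightarrow> real) set"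
  assumes "finite K" "finite I" and cc: "\<And>i. i \<in> I \<Longrightarrow> compact (P i) \<and> fun_convex (P i)"
    and "indicator_relation I a P"
  shows "indicator_relation I a (\<lambda>i. zero_coords K ` P i)"
  using \<open>finite K\<close>
proof (induction K rule: finite_induct)
  case empty
  have "zero_coords {} ` P i = P i" for i by (simp add: zero_coords_def)
  then show ?case using \<open>indicator_relation I a P\<close> by simp
next
  case (insert k K)
  have "zero_coords (insert k K) ` P i = (\<lambda>x. x(k := 0)) ` zero_coords K ` P i" for i
    unfolding image_image by (intro image_cong) (auto simp: zero_coords_def)
  moreover have "compact (zero_coords K ` P i) \<and> fun_convex (zero_coords K ` P i)" if "i \<in> I" for i
  proof (rule compact_fun_convex_image)
    show "continuous_on UNIV (zero_coords K)"
    proof (rule continuous_on_coordinatewise_then_product)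
      show "continuous_on UNIV (\<lambda>x. zero_coords K x j)" for j
        by (cases "j \<in> K") (simp_all add: zero_coords_def)
    qed
  qed (use cc[OF that] in \<open>auto simp: zero_coords_def fun_eq_iff\<close>)
  ultimately show ?case
    using indicator_relation_drop_coordinate[OF \<open>finite I\<close> _ insert.IH] by simp
qed

lemma indicator_relation_bij_image:
  assumes "bij f" "indicator_relation I a P"
  shows "indicator_relation I a (\<lambda>i. f ` P i)"
proof -
  have "f ` P i = inv f -` P i" for i
    using bij_vimage_eq_inv_image[OF bij_imp_bij_inv[OF \<open>bij f\<close>]] by (simp add: inv_inv_eq[OF \<open>bij f\<close>])
  with assms(2) show ?thesis by (simp add: indicator_relation_def indicator_vimage)
qed

lemma bij_shear:
  fixes L :: "('a \<Rightarrow> 'b::ab_group_add) \<Rightarrow> 'b"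
  assumes "\<And>x v. L (x(c := v)) = L x"
  shows "bij (\<lambda>x. x(c := x c + L x))"
proof (rule o_bij)
  show "(\<lambda>x. x(c := x c - L x)) \<circ> (\<lambda>x. x(c := x c + L x)) = id"
    by (simp add: fun_eq_iff assms)
  show "(\<lambda>x. x(c := x c + L x)) \<circ> (\<lambda>x. x(c := x c - L x)) = id"
    by (simp add: fun_eq_iff assms)
qed

definition linear_form :: "(nat \<Rightarrow> real) \<Rightarrow> nat \<Rightarrow> (nat \<Rightarrow> real) \<Rightarrow> real" where
  "linear_form W N x = (\<Sum>j\<le>N. W j * x j)"

lemma linear_form_affine:
  "linear_form W N (\<lambda>j. (1 - u) * x j + u * y j) = (1 - u) * linear_form W N x + u * linear_form W N y"
  by (simp add: linear_form_def distrib_left sum.distrib sum_distrib_left mult.left_commute)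

lemma continuous_on_linear_form: "continuous_on UNIV (linear_form W N)"
  unfolding linear_form_def
  by (intro continuous_intros continuous_on_sum) (simp add: continuous_on_product_coordinates)

lemma compact_convex_linear_form_image:
  assumes "compact S" "fun_convex S"
  shows "compact (linear_form W N ` S) \<and> convex (linear_form W N ` S)"
proof
  show "compact (linear_form W N ` S)"
    by (rule compact_continuous_image[OF continuous_on_subset[OF continuous_on_linear_form subset_UNIV] assms(1)])
  show "convex (linear_form W N ` S)"
  proof (rule convexI)
    fix s t u v :: real
    assume "s \<in> linear_form W N ` S" "t \<in> linear_form W N ` S" and uv: "0 \<le> u" "0 \<le> v" "u + v = 1"
    then obtain x y where "x \<in> S" "y \<in> S" "s = linear_form W N x" "t = linear_form W N y" by auto
    moreover have "(\<lambda>j. (1 - v) * x j + v * y j) \<in> S"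
      using assms(2) \<open>x \<in> S\<close> \<open>y \<in> S\<close> uv unfolding fun_convex_def by simp
    moreover have "u *\<^sub>R s + v *\<^sub>R t = linear_form W N (\<lambda>j. (1 - v) * x j + v * y j)"
      using \<open>s = linear_form W N x\<close> \<open>t = linear_form W N y\<close> uv
      by (simp add: linear_form_affine)
    ultimately show "u *\<^sub>R s + v *\<^sub>R t \<in> linear_form W N ` S" by blast
  qed
qed

text \<open>Shearing \<open>linear_form W N x\<close> into a spare coordinate \<open>c > N\<close> is bijective, and then
  forgetting the coordinates \<open>\<le> N\<close> leaves a copy of the image on the \<open>c\<close>-th axis.\<close>
lemma indicator_relation_linear_form_image:
  assumes "finite I" and cc: "\<And>i. i \<in> I \<Longrightarrow> compact (P i) \<and> fun_convex (P i)"
    and supp: "\<And>i x j. i \<in> I \<Longrightarrow> x \<in> P i \<Longrightarrow> N < j \<Longrightarrow> x j = 0"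
    and rel: "indicator_relation I a P"
  shows "indicator_relation I a (\<lambda>i. linear_form W N ` P i)"
proof -
  define c where "c = Suc N"
  define shear where "shear x = x(c := x c + linear_form W N x)" for x
  define axis where "axis t = (\<lambda>_. 0 :: real)(c := t)" for t
  have "bij shear"
    unfolding shear_def by (rule bij_shear) (simp add: linear_form_def c_def)
  have shear_cc: "compact (shear ` P i) \<and> fun_convex (shear ` P i)" if "i \<in> I" for i
  proof (rule compact_fun_convex_image)
    show "continuous_on UNIV shear"
    proof (rule continuous_on_coordinatewise_then_product)
      show "continuous_on UNIV (\<lambda>x. shear x j)" for j
        by (cases "j = c") (auto simp: shear_def intro!: continuous_intros continuous_on_linear_form)
    qed
    show "shear (\<lambda>j. (1 - u) * x j + u * y j) = (\<lambda>j. (1 - u) * shear x j + u * shear y j)" for x y u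
      by (simp add: shear_def linear_form_affine fun_eq_iff) (simp add: algebra_simps)
  qed (use cc[OF that] in auto)
  have "indicator_relation I a (\<lambda>i. zero_coords {..N} ` shear ` P i)"
    using indicator_relation_zero_coords[OF finite_atMost \<open>finite I\<close> shear_cc]
      indicator_relation_bij_image[OF \<open>bij shear\<close> rel] by simp
  moreover have "zero_coords {..N} ` shear ` P i = axis ` linear_form W N ` P i" if "i \<in> I" for i
  proof -
    have "zero_coords {..N} (shear x) = axis (linear_form W N x)" if "x \<in> P i" for x
      using supp[OF \<open>i \<in> I\<close> that] by (auto simp: zero_coords_def shear_def axis_def c_def fun_eq_iff)
    then show ?thesis by (auto simp: image_image intro!: image_cong)
  qed
  moreover have "inj axis" by (rule injI) (metis axis_def fun_upd_same)
  ultimately show ?thesis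
    by (auto simp: indicator_relation_def indicator_def inj_image_mem_iff dest: spec[of _ "axis _"])
qed

lemma indicator_relation_Sup_linear_form:
  assumes "finite I" and cc: "\<And>i. i \<in> I \<Longrightarrow> compact (P i) \<and> fun_convex (P i)"
    and "\<And>i x j. i \<in> I \<Longrightarrow> x \<in> P i \<Longrightarrow> N < j \<Longrightarrow> x j = 0"
    and "indicator_relation I a P"
  shows "(\<Sum>i\<in>{i\<in>I. P i \<noteq> {} \<and> Sup (linear_form W N ` P i) = h}. a i) = 0"
proof -
  have "indicator_relation I a (\<lambda>i. linear_form W N ` P i)"
    using assms by (rule indicator_relation_linear_form_image)
  then have "(\<Sum>i\<in>{i\<in>I. linear_form W N ` P i \<noteq> {} \<and> Sup (linear_form W N ` P i) = h}. a i) = 0"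
    using \<open>finite I\<close> compact_convex_linear_form_image cc by (intro indicator_relation_Sup_eq) auto
  then show ?thesis by simp
qed

section \<open>Base polytopes and lexicographically first bases\<close>

lemma base_polytope_coord_eq_0:
  assumes "x \<in> base_polytope M" "\<forall>B\<in>M. j \<notin> B"
  shows "x j = 0"
  using assms by (auto simp: base_polytope_def intro!: sum.neutral)

lemma indicator_mem_base_polytope:
  assumes "finite M" "B \<in> M"
  shows "indicator B \<in> base_polytope M"
proof -
  define w where "w B' = (if B' = B then 1 else 0 :: real)" for B'
  have "indicator B = (\<lambda>j. \<Sum>B'\<in>M. w B' * (if j \<in> B' then 1 else 0))"
    using assms by (simp add: w_def indicator_def fun_eq_iff if_distrib[of "\<lambda>r. r * _"] cong: if_cong)
  moreover have "(\<Sum>B'\<in>M. w B') = 1" using assms by (simp add: w_def)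
  moreover have "\<forall>B'\<in>M. 0 \<le> w B'" by (simp add: w_def)
  ultimately show ?thesis
    unfolding base_polytope_def by blast
qed

lemma fun_convex_base_polytope: "fun_convex (base_polytope M)"
  unfolding fun_convex_def
proof (intro ballI)
  fix x y u assume "x \<in> base_polytope M" "y \<in> base_polytope M" "u \<in> {0..1::real}"
  then obtain wx wy where wx: "\<forall>B\<in>M. 0 \<le> wx B" "(\<Sum>B\<in>M. wx B) = 1"
      "x = (\<lambda>j. \<Sum>B\<in>M. wx B * (if j \<in> B then 1 else 0))"
    and wy: "\<forall>B\<in>M. 0 \<le> wy B" "(\<Sum>B\<in>M. wy B) = 1"
      "y = (\<lambda>j. \<Sum>B\<in>M. wy B * (if j \<in> B then 1 else 0))"
    by (auto simp: base_polytope_def)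
  define w where "w B = (1 - u) * wx B + u * wy B" for B
  have "\<forall>B\<in>M. 0 \<le> w B" using wx wy \<open>u \<in> {0..1}\<close> by (auto simp: w_def)
  moreover have "(\<Sum>B\<in>M. w B) = 1"
    using wx wy by (simp add: w_def sum.distrib sum_distrib_left[symmetric])
  moreover have "(\<lambda>j. (1 - u) * x j + u * y j) = (\<lambda>j. \<Sum>B\<in>M. w B * (if j \<in> B then 1 else 0))"
    by (simp add: wx(3) wy(3) w_def distrib_right mult.assoc sum.distrib sum_distrib_left)
  ultimately show "(\<lambda>j. (1 - u) * x j + u * y j) \<in> base_polytope M"
    unfolding base_polytope_def by blast
qed

text \<open>The base polytope is the image of the compact simplex of weight vectors.\<close>
lemma compact_base_polytope:
  assumes "finite M"
  shows "compact (base_polytope M)"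
proof -
  define \<Delta> where "\<Delta> = (\<Pi> B\<in>UNIV. if B \<in> M then {0..1::real} else {0}) \<inter> {w. (\<Sum>B\<in>M. w B) = 1}"
  define f where "f w = (\<lambda>j. \<Sum>B\<in>M. w B * (if j \<in> B then 1 else (0::real)))" for w :: "nat set \<Rightarrow> real"
  have "compact (\<Pi> B\<in>UNIV. if B \<in> M then {0..1::real} else {0})"
  proof -
    have "compactin (product_topology (\<lambda>_. euclidean) UNIV)
        (\<Pi>\<^sub>E B\<in>UNIV. if B \<in> M then {0..1::real} else {0})"
      by (subst compactin_PiE) auto
    then show ?thesis by (simp add: euclidean_product_topology PiE_UNIV_domain)
  qed
  moreover have "closed {w :: nat set \<Rightarrow> real. (\<Sum>B\<in>M. w B) = 1}"
    by (intro closed_Collect_eq continuous_intros continuous_on_sum)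
      (simp_all add: continuous_on_product_coordinates)
  ultimately have "compact \<Delta>" unfolding \<Delta>_def by (rule compact_Int_closed)
  moreover have "continuous_on UNIV f"
    unfolding f_def
    by (intro continuous_on_coordinatewise_then_product continuous_on_sum continuous_intros)
      (simp add: continuous_on_product_coordinates)
  moreover have "base_polytope M = f ` \<Delta>"
  proof
    show "base_polytope M \<subseteq> f ` \<Delta>"
    proof
      fix x assume "x \<in> base_polytope M"
      then obtain w where w: "\<forall>B\<in>M. 0 \<le> w B" "(\<Sum>B\<in>M. w B) = 1"
        "x = (\<lambda>j. \<Sum>B\<in>M. w B * (if j \<in> B then 1 else 0))" by (auto simp: base_polytope_def)
      define w' where "w' B = (if B \<in> M then w B else 0)" for B
      have "w B \<le> 1" if "B \<in> M" for B
        using member_le_sum[of B M w] w that assms by auto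
      then have "w' \<in> \<Delta>" using w by (auto simp: \<Delta>_def w'_def)
      moreover have "x = f w'" using w by (auto simp: f_def w'_def fun_eq_iff intro!: sum.cong)
      ultimately show "x \<in> f ` \<Delta>" by blast
    qed
    show "f ` \<Delta> \<subseteq> base_polytope M"
    proof
      fix x assume "x \<in> f ` \<Delta>"
      then obtain w where "w \<in> \<Delta>" "x = f w" by auto
      then have "\<forall>B\<in>M. 0 \<le> w B" "(\<Sum>B\<in>M. w B) = 1"
        by (auto simp: \<Delta>_def Pi_iff) (metis atLeastAtMost_iff)
      then show "x \<in> base_polytope M" unfolding base_polytope_def \<open>x = f w\<close> f_def by blast
    qed
  qed
  ultimately show ?thesis
    using compact_continuous_image continuous_on_subset by (metis subset_UNIV)
qed

lemma Sup_linear_form_base_polytope: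
  assumes "finite M" "B0 \<in> M"
    and max: "\<And>B. B \<in> M \<Longrightarrow> linear_form W N (indicator B) \<le> linear_form W N (indicator B0)"
  shows "Sup (linear_form W N ` base_polytope M) = linear_form W N (indicator B0)"
proof (rule cSup_eq_maximum)
  show "linear_form W N (indicator B0) \<in> linear_form W N ` base_polytope M"
    using indicator_mem_base_polytope[OF assms(1,2)] by (rule imageI)
  fix t assume "t \<in> linear_form W N ` base_polytope M"
  then obtain w where w: "\<forall>B\<in>M. 0 \<le> w B" "(\<Sum>B\<in>M. w B) = 1"
    and t: "t = linear_form W N (\<lambda>j. \<Sum>B\<in>M. w B * (if j \<in> B then 1 else 0))"
    by (auto simp: base_polytope_def)
  have "t = (\<Sum>j\<le>N. \<Sum>B\<in>M. w B * (W j * indicator B j))"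
    unfolding t linear_form_def by (simp add: sum_distrib_left indicator_def of_bool_def mult.left_commute)
  also have "\<dots> = (\<Sum>B\<in>M. w B * linear_form W N (indicator B))"
    unfolding linear_form_def sum_distrib_left by (rule sum.swap)
  also have "\<dots> \<le> (\<Sum>B\<in>M. w B * linear_form W N (indicator B0))"
    using w(1) max by (intro sum_mono mult_left_mono) auto
  also have "\<dots> = linear_form W N (indicator B0)"
    using w(2) by (simp add: sum_distrib_right[symmetric])
  finally show "t \<le> linear_form W N (indicator B0)" .
qed

lemma sum_half_powers_lt:
  assumes "finite S" "\<forall>p\<in>S. x < p"
  shows "(\<Sum>p\<in>S. (1/2::real) ^ p) < (1/2) ^ x"
proof -
  have interval: "(\<Sum>p\<in>{Suc x..<Suc x + N}. (1/2::real) ^ p) = (1/2) ^ x - (1/2) ^ (x + N)" for N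
  proof (induction N)
    case (Suc N)
    have "{Suc x..<Suc x + Suc N} = insert (Suc x + N) {Suc x..<Suc x + N}" by auto
    with Suc show ?case by simp
  qed simp
  have "S \<subseteq> {Suc x..<Suc x + Max (insert 0 S)}"
  proof
    fix p assume "p \<in> S"
    with assms have "x < p" "p \<le> Max (insert 0 S)" by auto
    then show "p \<in> {Suc x..<Suc x + Max (insert 0 S)}" by simp
  qed
  then have "(\<Sum>p\<in>S. (1/2::real) ^ p) \<le> (\<Sum>p\<in>{Suc x..<Suc x + Max (insert 0 S)}. (1/2) ^ p)"
    by (rule sum_mono2[rotated]) auto
  also have "\<dots> < (1/2) ^ x" unfolding interval by simp
  finally show ?thesis .
qed

lemma lexord_sum_half_powers:
  assumes "sorted L" "distinct L" "sorted L'" "distinct L'" "(L, L') \<in> lexord {(i, j). i < j}"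
  shows "set L \<subset> set L' \<or> (\<Sum>p\<in>set L'. (1/2::real) ^ p) < (\<Sum>p\<in>set L. (1/2) ^ p)"
  using assms
proof (induction L arbitrary: L')
  case Nil
  then show ?case by auto
next
  case (Cons x xs)
  obtain y ys where L': "L' = y # ys" using Cons.prems(5) by (cases L') auto
  show ?case
  proof (cases "x < y")
    case True
    with Cons.prems(3) L' have "\<forall>p\<in>set L'. x < p" by auto
    then have "(\<Sum>p\<in>set L'. (1/2::real) ^ p) < (1/2) ^ x" by (intro sum_half_powers_lt) auto
    also have "\<dots> \<le> (\<Sum>p\<in>set (x # xs). (1/2) ^ p)" by (rule member_le_sum) auto
    finally show ?thesis by simp
  next
    case False
    with Cons.prems(5) L' have "x = y" "(xs, ys) \<in> lexord {(i, j). i < j}" by auto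
    moreover have "x \<notin> set xs" "x \<notin> set ys" using Cons.prems L' \<open>x = y\<close> by auto
    ultimately show ?thesis
      using Cons.IH[of ys] Cons.prems L' by auto
  qed
qed

definition lex_weight :: "(nat \<Rightarrow> nat) \<Rightarrow> nat set \<Rightarrow> real" where
  "lex_weight \<sigma> B = (\<Sum>j\<in>B. (1/2) ^ inv \<sigma> j)"

lemma set_sorted_positions: "finite B \<Longrightarrow> set (sorted_positions \<sigma> B) = inv \<sigma> ` B"
  by (simp add: sorted_positions_def)

lemma sum_half_powers_sorted_positions:
  assumes "bij \<sigma>" "finite B"
  shows "(\<Sum>p\<in>set (sorted_positions \<sigma> B). (1/2::real) ^ p) = lex_weight \<sigma> B"
proof -
  have "inj_on (inv \<sigma>) B"
    using bij_imp_bij_inv[OF assms(1)] bij_is_inj inj_on_subset by blast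
  then show ?thesis by (simp add: set_sorted_positions[OF assms(2)] lex_weight_def sum.reindex)
qed

lemma lex_weight_lexord:
  assumes "bij \<sigma>" "finite B" "finite B'"
    and "(sorted_positions \<sigma> B, sorted_positions \<sigma> B') \<in> lexord {(i, j). i < j}"
  shows "B \<subset> B' \<or> lex_weight \<sigma> B' < lex_weight \<sigma> B"
proof -
  have "inv \<sigma> ` B \<subset> inv \<sigma> ` B' \<or> lex_weight \<sigma> B' < lex_weight \<sigma> B"
    using lexord_sum_half_powers[OF _ _ _ _ assms(4)] assms(1-3)
    by (simp add: sorted_positions_def sum_half_powers_sorted_positions[symmetric])
  moreover have "inj (inv \<sigma>)" using assms(1) bij_imp_bij_inv bij_is_inj by blast
  ultimately show ?thesis by (auto simp: inj_image_subset_iff inj_image_eq_iff psubset_eq)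
qed

lemma lex_weight_strict_mono:
  assumes "finite B'" "B \<subset> B'"
  shows "lex_weight \<sigma> B < lex_weight \<sigma> B'"
proof -
  have "lex_weight \<sigma> B' = (\<Sum>j\<in>B' - B. (1/2) ^ inv \<sigma> j) + lex_weight \<sigma> B"
    unfolding lex_weight_def using assms by (intro sum.subset_diff) auto
  moreover have "(\<Sum>j\<in>B' - B. (1/2::real) ^ inv \<sigma> j) > 0"
    using assms by (intro sum_pos) auto
  ultimately show ?thesis by simp
qed

lemma sorted_positions_inj:
  assumes "bij \<sigma>" "finite B" "finite B'" "sorted_positions \<sigma> B = sorted_positions \<sigma> B'"
  shows "B = B'"
proof -
  have "inv \<sigma> ` B = inv \<sigma> ` B'" using assms(2-4) by (metis set_sorted_positions)
  moreover have "inj (inv \<sigma>)" using assms(1) bij_imp_bij_inv bij_is_inj by blast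
  ultimately show ?thesis by (simp add: inj_image_eq_iff)
qed

lemma lexord_less_nat_linear:
  "xs = ys \<or> (xs, ys) \<in> lexord {(i::nat, j). i < j} \<or> (ys, xs) \<in> lexord {(i, j). i < j}"
proof -
  have "\<forall>a b. (a, b) \<in> {(i::nat, j). i < j} \<or> a = b \<or> (b, a) \<in> {(i::nat, j). i < j}" by auto
  from lexord_linear[OF this] show ?thesis by blast
qed

lemma lex_weight_inj:
  assumes "bij \<sigma>" "finite B" "finite B'" "lex_weight \<sigma> B = lex_weight \<sigma> B'"
  shows "B = B'"
proof (rule ccontr)
  assume "B \<noteq> B'"
  with sorted_positions_inj assms(1-3) lexord_less_nat_linear
  consider "(sorted_positions \<sigma> B, sorted_positions \<sigma> B') \<in> lexord {(i, j). i < j}"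
    | "(sorted_positions \<sigma> B', sorted_positions \<sigma> B) \<in> lexord {(i, j). i < j}"
    by blast
  then show False
  proof cases
    case 1
    from lex_weight_lexord[OF assms(1-3) this] show False
      using lex_weight_strict_mono[OF assms(3), of B \<sigma>] assms(4) by auto
  next
    case 2
    from lex_weight_lexord[OF assms(1,3,2) this] show False
      using lex_weight_strict_mono[OF assms(2), of B' \<sigma>] assms(4) by auto
  qed
qed

lemma matroid_bases_antichain:
  assumes "matroid_on E M" "B1 \<in> M" "B2 \<in> M" "B1 \<subseteq> B2"
  shows "B1 = B2"
proof (rule ccontr)
  assume "B1 \<noteq> B2"
  then obtain x where "x \<in> B2 - B1" using assms(4) by blast
  then obtain y where "y \<in> B1 - B2" using assms(1-3) unfolding matroid_on_def by blast
  then show False using assms(4) by blast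
qed

text \<open>A basis lexicographically before another one is either a proper subset of it, which bases
  never are, or of larger weight.\<close>
lemma lex_first_basis_max_lex_weight:
  assumes M: "matroid_on E M" and "finite E" "bij \<sigma>"
  shows "lex_first_basis M \<sigma> \<in> M \<and> (\<forall>B\<in>M. lex_weight \<sigma> B \<le> lex_weight \<sigma> (lex_first_basis M \<sigma>))"
proof -
  have finB: "finite B" if "B \<in> M" for B
    using M \<open>finite E\<close> that by (meson finite_subset matroid_on_def)
  have "M \<subseteq> Pow E" "M \<noteq> {}" using M by (auto simp: matroid_on_def)
  then have "finite M" using \<open>finite E\<close> finite_subset by blast
  obtain B0 where B0: "B0 \<in> M" and max: "\<And>B. B \<in> M \<Longrightarrow> lex_weight \<sigma> B \<le> lex_weight \<sigma> B0"
  proof -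
    have "Max (lex_weight \<sigma> ` M) \<in> lex_weight \<sigma> ` M" using \<open>finite M\<close> \<open>M \<noteq> {}\<close> by simp
    then obtain B0 where "B0 \<in> M" "lex_weight \<sigma> B0 = Max (lex_weight \<sigma> ` M)" by auto
    with \<open>finite M\<close> show thesis by (intro that[of B0]) auto
  qed
  let ?lt = "\<lambda>B B'. (sorted_positions \<sigma> B, sorted_positions \<sigma> B') \<in> lexord {(i, j). i < j}"
  have not_lt_B0: "\<not> ?lt B B0" if "B \<in> M" "B \<noteq> B0" for B
  proof
    assume "?lt B B0"
    from lex_weight_lexord[OF \<open>bij \<sigma>\<close> finB[OF \<open>B \<in> M\<close>] finB[OF B0] this]
    show False
      using matroid_bases_antichain[OF M \<open>B \<in> M\<close> B0] max[OF \<open>B \<in> M\<close>] \<open>B \<noteq> B0\<close> by auto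
  qed
  have "lex_first_basis M \<sigma> = B0"
    unfolding lex_first_basis_def
  proof (rule the_equality)
    show "B0 \<in> M \<and> (\<forall>B'\<in>M. B' \<noteq> B0 \<longrightarrow> ?lt B0 B')"
      using B0 not_lt_B0 lexord_less_nat_linear sorted_positions_inj[OF \<open>bij \<sigma>\<close> finB[OF B0] finB]
      by blast
    show "B = B0" if "B \<in> M \<and> (\<forall>B'\<in>M. B' \<noteq> B \<longrightarrow> ?lt B B')" for B
      using that B0 not_lt_B0 by blast
  qed
  with B0 max show ?thesis by simp
qed

lemma lex_weight_eq_linear_form:
  assumes "B \<subseteq> {..n}"
  shows "lex_weight \<sigma> B = linear_form (\<lambda>j. (1/2) ^ inv \<sigma> j) n (indicator B)"
proof -
  have "linear_form (\<lambda>j. (1/2) ^ inv \<sigma> j) n (indicator B) = (\<Sum>j\<in>{..n}. if j \<in> B then (1/2) ^ inv \<sigma> j else 0)"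
    unfolding linear_form_def by (intro sum.cong) (auto simp: indicator_def)
  also have "\<dots> = lex_weight \<sigma> B"
    using assms by (simp add: sum.inter_restrict[symmetric] Int_absorb1 lex_weight_def)
  finally show ?thesis by simp
qed

lemma Sup_lex_weight_base_polytope:
  assumes M: "matroid_on {..n} M" and "bij \<sigma>"
  shows "base_polytope M \<noteq> {} \<and>
    Sup (linear_form (\<lambda>j. (1/2) ^ inv \<sigma> j) n ` base_polytope M) = lex_weight \<sigma> (lex_first_basis M \<sigma>)"
proof
  let ?W = "\<lambda>j. (1/2::real) ^ inv \<sigma> j"
  have bases: "\<forall>B\<in>M. B \<subseteq> {..n}" "finite M"
    using M finite_subset[of M "Pow {..n}"] by (auto simp: matroid_on_def)
  have lfb: "lex_first_basis M \<sigma> \<in> M"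
    and lfb_max: "\<forall>B\<in>M. lex_weight \<sigma> B \<le> lex_weight \<sigma> (lex_first_basis M \<sigma>)"
    using lex_first_basis_max_lex_weight[OF M finite_atMost \<open>bij \<sigma>\<close>] by auto
  have weight: "linear_form ?W n (indicator B) = lex_weight \<sigma> B" if "B \<in> M" for B
    using lex_weight_eq_linear_form bases(1) that by metis
  show "base_polytope M \<noteq> {}"
    using indicator_mem_base_polytope[OF bases(2) lfb] by blast
  have "Sup (linear_form ?W n ` base_polytope M) = linear_form ?W n (indicator (lex_first_basis M \<sigma>))"
    using lfb_max weight lfb by (intro Sup_linear_form_base_polytope[OF bases(2) lfb]) simp
  then show "Sup (linear_form ?W n ` base_polytope M) = lex_weight \<sigma> (lex_first_basis M \<sigma>)"
    using weight[OF lfb] by simp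
qed

lemma sum_coeffs_lex_first_basis_eq_0:
  fixes M :: "'i \<Rightarrow> nat set set"
  assumes "finite I" and M: "\<And>i. i \<in> I \<Longrightarrow> matroid_on {..n} (M i)"
    and rel: "indicator_relation I a (\<lambda>i. base_polytope (M i))" and "\<sigma> permutes {..n}"
  shows "(\<Sum>i\<in>{i\<in>I. lex_first_basis (M i) \<sigma> = B}. a i) = 0"
proof -
  define W where "W j = (1/2::real) ^ inv \<sigma> j" for j
  have "bij \<sigma>" using \<open>\<sigma> permutes {..n}\<close> by (rule permutes_bij)
  have bases: "\<forall>B\<in>M i. B \<subseteq> {..n}" "finite (M i)" "lex_first_basis (M i) \<sigma> \<in> M i" if "i \<in> I" for i
    using M[OF that] finite_subset[of "M i" "Pow {..n}"]
      lex_first_basis_max_lex_weight[OF M[OF that] finite_atMost \<open>bij \<sigma>\<close>]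
    by (auto simp: matroid_on_def)
  have zero: "(\<Sum>i\<in>{i\<in>I. base_polytope (M i) \<noteq> {} \<and>
      Sup (linear_form W n ` base_polytope (M i)) = lex_weight \<sigma> B}. a i) = 0"
  proof (rule indicator_relation_Sup_linear_form[OF \<open>finite I\<close> _ _ rel])
    show "compact (base_polytope (M i)) \<and> fun_convex (base_polytope (M i))" if "i \<in> I" for i
      using compact_base_polytope[OF bases(2)[OF that]] fun_convex_base_polytope by simp
    show "x j = 0" if "i \<in> I" "x \<in> base_polytope (M i)" "n < j" for i x j
    proof (rule base_polytope_coord_eq_0[OF that(2)])
      show "\<forall>B\<in>M i. j \<notin> B"
        using bases(1)[OF that(1)] that(3) by (meson atMost_iff not_le subsetD)
    qed
  qed
  show ?thesis
  proof (cases "finite B")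
    case True
    have "lex_first_basis (M i) \<sigma> = B \<longleftrightarrow>
        lex_weight \<sigma> (lex_first_basis (M i) \<sigma>) = lex_weight \<sigma> B" if "i \<in> I" for i
      using lex_weight_inj[OF \<open>bij \<sigma>\<close> _ True] bases[OF that]
      by (meson finite_atMost finite_subset)
    with Sup_lex_weight_base_polytope[OF M \<open>bij \<sigma>\<close>]
    have "{i\<in>I. lex_first_basis (M i) \<sigma> = B} = {i\<in>I. base_polytope (M i) \<noteq> {} \<and>
        Sup (linear_form W n ` base_polytope (M i)) = lex_weight \<sigma> B}"
      unfolding W_def by (intro Collect_cong) metis
    with zero show ?thesis by simp
  next
    case False
    then have "lex_first_basis (M i) \<sigma> \<noteq> B" if "i \<in> I" for i
      using bases[OF that] finite_subset by blast
    then have "{i\<in>I. lex_first_basis (M i) \<sigma> = B} = {}" by blast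
    then show ?thesis by (simp only: sum.empty)
  qed
qed

section \<open>Valuativity\<close>

lemma sum_fun_apply: "(\<Sum>i\<in>A. f i) x = (\<Sum>i\<in>A. f i x)"
  by (induction A rule: infinite_finite_induct) auto

lemma sum_const_lessThan_add:
  "(\<Sum>_<p + q. x) = (\<Sum>_<p. x) + (\<Sum>_<q. x :: 'g::ab_group_add)" for p q :: nat
  by (induction q) (simp_all add: add.assoc)

lemma zsmult_diff_of_nat: "zsmult (int p - int q) x = (\<Sum>_<p. x) - (\<Sum>_<q. x :: 'g::ab_group_add)"
proof (cases "q \<le> p")
  case True
  then obtain d where "p = q + d" using le_Suc_ex by blast
  then show ?thesis by (simp add: zsmult_def sum_const_lessThan_add)
next
  case False
  then obtain d where "q = p + d" by (metis le_Suc_ex nat_le_linear)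
  then show ?thesis by (simp add: zsmult_def sum_const_lessThan_add)
qed

lemma zsmult_add: "zsmult (k + l) x = zsmult k x + zsmult l (x :: 'g::ab_group_add)"
proof -
  have "k + l = int (nat k + nat l) - int (nat (- k) + nat (- l))" by simp
  then have "zsmult (k + l) x = (\<Sum>_<nat k + nat l. x) - (\<Sum>_<nat (- k) + nat (- l). x)"
    by (simp only: zsmult_diff_of_nat)
  also have "\<dots> = zsmult k x + zsmult l x"
    unfolding sum_const_lessThan_add by (simp add: zsmult_def algebra_simps)
  finally show ?thesis .
qed

lemma zsmult_zero_left [simp]: "zsmult 0 x = 0"
  by (simp add: zsmult_def)

lemma zsmult_zero_right [simp]: "zsmult k (0 :: 'g::ab_group_add) = 0"
  by (simp add: zsmult_def)

lemma zsmult_sum_left: "(\<Sum>i\<in>A. zsmult (f i) x) = zsmult (\<Sum>i\<in>A. f i) (x :: 'g::ab_group_add)"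
  by (induction A rule: infinite_finite_induct) (simp_all add: zsmult_add)

lemma zsmult_apply: "zsmult k f y = zsmult k (f y)"
  by (simp add: zsmult_def sum_fun_apply)

lemma lex_first_basis_singleton: "lex_first_basis {B} \<sigma> = B"
  unfolding lex_first_basis_def by (rule the_equality) auto

text \<open>The value at \<open>p\<^sub>\<sigma>\<close> as a function of \<open>B\<^sub>\<sigma>(M) = B\<close> is read off the matroid \<open>{B}\<close>,
  whose only basis is \<open>B\<close>.\<close>
lemma valuative_if_determined_by_lex_first_basis:
  fixes \<phi> :: "nat set set \<Rightarrow> (nat \<Rightarrow> nat) \<Rightarrow> 'g::ab_group_add"
  assumes \<phi>: "\<And>M \<sigma>. \<phi> M \<sigma> = (if \<sigma> permutes {..n} then \<phi> {lex_first_basis M \<sigma>} \<sigma> else 0)"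
  shows "valuative n \<phi>"
  unfolding valuative_def
proof (intro allI impI ext)
  fix Ms :: "nat set set list" and a :: "int list" and \<sigma> :: "nat \<Rightarrow> nat"
  assume hyps: "\<forall>M\<in>set Ms. matroid_on {..n} M"
    "\<forall>x. (\<Sum>i<length Ms. a ! i * indicator (base_polytope (Ms ! i)) x) = (0::int)"
  let ?I = "{..<length Ms}"
  have M: "\<And>i. i \<in> ?I \<Longrightarrow> matroid_on {..n} (Ms ! i)"
    and rel: "indicator_relation ?I (\<lambda>i. a ! i) (\<lambda>i. base_polytope (Ms ! i))"
    using hyps by (auto simp: indicator_relation_def)
  define b where "b i = lex_first_basis (Ms ! i) \<sigma>" for i
  show "(\<Sum>i<length Ms. zsmult (a ! i) (\<phi> (Ms ! i))) \<sigma> = 0 \<sigma>"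
  proof (cases "\<sigma> permutes {..n}")
    case True
    have "\<phi> (Ms ! i) \<sigma> = \<phi> {b i} \<sigma>" for i
      using \<phi>[of "Ms ! i" \<sigma>] True by (simp add: b_def)
    then have "(\<Sum>i\<in>?I. zsmult (a ! i) (\<phi> (Ms ! i))) \<sigma> = (\<Sum>i\<in>?I. zsmult (a ! i) (\<phi> {b i} \<sigma>))"
      by (simp add: sum_fun_apply zsmult_apply)
    also have "\<dots> = (\<Sum>B\<in>b ` ?I. \<Sum>i\<in>{i\<in>?I. b i = B}. zsmult (a ! i) (\<phi> {b i} \<sigma>))"
      by (rule sum.group[symmetric]) auto
    also have "\<dots> = (\<Sum>B\<in>b ` ?I. zsmult (\<Sum>i\<in>{i\<in>?I. b i = B}. a ! i) (\<phi> {B} \<sigma>))"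
      by (intro sum.cong refl) (simp add: zsmult_sum_left)
    also have "\<dots> = 0"
      using sum_coeffs_lex_first_basis_eq_0[OF finite_lessThan M rel True]
      by (intro sum.neutral) (simp add: b_def zsmult_def)
    finally show ?thesis by simp
  next
    case False
    then have "\<phi> (Ms ! i) \<sigma> = 0" for i
      using \<phi>[of "Ms ! i" \<sigma>] by simp
    then show ?thesis by (simp add: sum_fun_apply zsmult_apply)
  qed
qed

lemma zero_mem_forget_kernel: "0 \<in> forget_kernel n"
proof -
  have "0 \<in> chowT_ring n" by (simp add: chowT_ring_def)
  then show ?thesis
    unfolding forget_kernel_def by (intro CollectI exI[of _ "\<lambda>_. 0"]) (simp flip: zero_fun_def)
qed

lemma valuative_nonequiv_if_valuative: "valuative n \<psi> \<Longrightarrow> valuative_nonequiv n \<psi>"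
  unfolding valuative_def valuative_nonequiv_def using zero_mem_forget_kernel by simp

lemma ext_power_at_lex_first_basis: "ext_power_at n {lex_first_basis M \<sigma>} \<sigma> = ext_power_at n M \<sigma>"
  by (simp add: fun_eq_iff ext_power_at_def lex_first_basis_singleton)

lemma chern_at_lex_first_basis: "chern_at n {lex_first_basis M \<sigma>} \<sigma> = chern_at n M \<sigma>"
  by (simp add: fun_eq_iff chern_at_def lex_first_basis_singleton)

theorem proposition5p6:
  fixes n :: nat
    and P Q :: "(vb \<times> nat \<Rightarrow>\<^sub>0 nat) \<Rightarrow>\<^sub>0 int"
  shows "valuative n (K_class n P) \<and> valuative n (chowT_class n Q) \<and>
         valuative_nonequiv n (chowT_class n Q)"
proof -
  have "valuative n (K_class n P)"
    by (rule valuative_if_determined_by_lex_first_basis)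
      (simp add: K_class_def ext_power_at_lex_first_basis)
  moreover have "valuative n (chowT_class n Q)"
    by (rule valuative_if_determined_by_lex_first_basis)
      (simp add: chowT_class_def chern_at_lex_first_basis)
  ultimately show ?thesis
    using valuative_nonequiv_if_valuative by blast
qed

end
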